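(* Let $n\ge1$ and let $T\in\mathcal{L}(\mathcal{H})$ be $n$-EP. If $T$ is regular, then $T$ is invertible.
   Context: $\mathcal{H}$ is a Hilbert space, $\mathcal{L}(\mathcal{H})$ the bounded operators on it; $N(\cdot)$ and $R(\cdot)$ denote kernel and range. $T$ is regular if $T$ has closed range and $N(T)\subset R(T^k)$ for every integer $k\ge0$. For $T$ with closed range, $T^\dagger$ is its Moore–Penrose inverse (unique solution of $TT^\dagger T=T$, $T^\dagger TT^\dagger=T^\dagger$, $(T^\dagger T)^*=T^\dagger T$, $(TT^\dagger)^*=TT^\dagger$). $T$ is $n$-EP if it has closed range and $T^nT^\dagger=T^\dagger T^n$. *)

theory Defs
  imports "HOL-Analysis.Analysis"
begin

text \<open>Bounded operators on a (real) Hilbert space 'a :: {real_inner, complete_space}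
  are represented as functions T :: 'a \<Rightarrow> 'a with bounded_linear T.\<close>

definition moore_penrose_inverse :: "('a::real_inner \<Rightarrow> 'a) \<Rightarrow> ('a \<Rightarrow> 'a) \<Rightarrow> bool" where
  "moore_penrose_inverse T S \<longleftrightarrow>
     bounded_linear S \<and>
     T \<circ> S \<circ> T = T \<and>
     S \<circ> T \<circ> S = S \<and>
     (\<forall>x y. inner (S (T x)) y = inner x (S (T y))) \<and>
     (\<forall>x y. inner (T (S x)) y = inner x (T (S y)))"

definition regular_op :: "('a::real_inner \<Rightarrow> 'a) \<Rightarrow> bool" where
  "regular_op T \<longleftrightarrow> closed (range T) \<and> (\<forall>k::nat. {x. T x = 0} \<subseteq> range (T ^^ k))"

definition n_EP :: "nat \<Rightarrow> ('a::real_inner \<Rightarrow> 'a) \<Rightarrow> bool" where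
  "n_EP n T \<longleftrightarrow> closed (range T) \<and>
     (\<exists>S. moore_penrose_inverse T S \<and> (T ^^ n) \<circ> S = S \<circ> (T ^^ n))"

definition invertible_op :: "('a::real_normed_vector \<Rightarrow> 'a) \<Rightarrow> bool" where
  "invertible_op T \<longleftrightarrow> (\<exists>S. bounded_linear S \<and> T \<circ> S = id \<and> S \<circ> T = id)"

end

theory Submission
  imports Defs
begin

text \<open>Let \<open>S\<close> be the Moore--Penrose inverse of \<open>T\<close>, commuting with \<open>T\<^sup>n\<close>. Since
  \<open>T\<^sup>n = T\<^sup>n S T = S T\<^sup>n\<^sup>+\<^sup>1\<close>, the range of \<open>T\<^sup>n\<close> lies in the range of \<open>S\<close>, on which
  \<open>S T\<close> is the identity; regularity puts \<open>N(T)\<close> into the range of \<open>T\<^sup>n\<close>, so \<open>T\<close> is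
  injective. Dually \<open>T\<^sup>n = T S T\<^sup>n = T T\<^sup>n S\<close>, so \<open>N(S) \<subseteq> N(T\<^sup>n\<^sup>+\<^sup>1) = 0\<close>. An injective
  operator with an inner inverse is cancelled by it, so \<open>S T = T S = id\<close>.\<close>

lemma funpow_inner_inverse_right:
  fixes f g :: "'a \<Rightarrow> 'a"
  assumes "f \<circ> g \<circ> f = f" "0 < n"
  shows "(f ^^ n) \<circ> g \<circ> f = f ^^ n"
proof -
  obtain m where "n = Suc m" using \<open>0 < n\<close> gr0_implies_Suc by blast
  then have "(f ^^ n) \<circ> g \<circ> f = f ^^ m \<circ> (f \<circ> g \<circ> f)"
    by (simp only: funpow_Suc_right comp_assoc)
  then show ?thesis using \<open>n = Suc m\<close> assms(1) by (simp only: funpow_Suc_right)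
qed

lemma funpow_inner_inverse_left:
  fixes f g :: "'a \<Rightarrow> 'a"
  assumes "f \<circ> g \<circ> f = f" "0 < n"
  shows "f \<circ> g \<circ> (f ^^ n) = f ^^ n"
proof -
  obtain m where "n = Suc m" using \<open>0 < n\<close> gr0_implies_Suc by blast
  then have "f \<circ> g \<circ> (f ^^ n) = (f \<circ> g \<circ> f) \<circ> f ^^ m"
    by (simp only: funpow.simps comp_assoc)
  then show ?thesis using \<open>n = Suc m\<close> assms(1) by (simp only: funpow.simps)
qed

lemma inner_inverse_inj_left_inverse:
  assumes "inj f" "f \<circ> g \<circ> f = f"
  shows "g \<circ> f = id"
proof
  fix x
  have "f (g (f x)) = f x" using assms(2) by (metis comp_apply)
  then show "(g \<circ> f) x = id x" using assms(1) by (simp add: inj_eq)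
qed

lemma inj_if_kernel_in_range_funpow:
  fixes T S :: "'a::real_vector \<Rightarrow> 'a"
  assumes "linear T" "linear S" "T \<circ> S \<circ> T = T" "S \<circ> T \<circ> S = S"
    and commute: "(T ^^ n) \<circ> S = S \<circ> (T ^^ n)" and "0 < n"
    and kernel: "{x. T x = 0} \<subseteq> range (T ^^ n)"
  shows "inj T"
  unfolding linear_injective_0[OF \<open>linear T\<close>]
proof (intro allI impI)
  fix x assume "T x = 0"
  then obtain y where "x = (T ^^ n) y" using kernel by blast
  also have "\<dots> = ((T ^^ n) \<circ> S \<circ> T) y"
    using funpow_inner_inverse_right[OF assms(3) \<open>0 < n\<close>] by simp
  also have "\<dots> = S ((T ^^ n) (T y))" using commute by (metis comp_apply)
  finally have "S (T x) = x" using assms(4) by (metis comp_apply)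
  with \<open>T x = 0\<close> show "x = 0" using linear_0[OF \<open>linear S\<close>] by simp
qed

lemma inj_commuting_inner_inverse:
  fixes T S :: "'a::real_vector \<Rightarrow> 'a"
  assumes "linear T" "linear S" "inj T" "T \<circ> S \<circ> T = T"
    and commute: "(T ^^ n) \<circ> S = S \<circ> (T ^^ n)" and "0 < n"
  shows "inj S"
  unfolding linear_injective_0[OF \<open>linear S\<close>]
proof (intro allI impI)
  fix z assume "S z = 0"
  have funpow_0: "(T ^^ k) 0 = 0" for k
    by (induction k) (simp_all add: linear_0[OF \<open>linear T\<close>])
  have "(T ^^ n) z = (T \<circ> S \<circ> (T ^^ n)) z"
    using funpow_inner_inverse_left[OF assms(4) \<open>0 < n\<close>] by simp
  also have "\<dots> = T ((T ^^ n) (S z))" using commute by (metis comp_apply)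
  also have "\<dots> = (T ^^ n) 0" using \<open>S z = 0\<close> funpow_0 linear_0[OF \<open>linear T\<close>] by simp
  finally show "z = 0" using inj_fn[OF \<open>inj T\<close>] by (simp add: inj_eq)
qed

theorem mainTheorem20:
  fixes T :: "'a::{real_inner, complete_space} \<Rightarrow> 'a" and n :: nat
  assumes "n \<ge> 1"
    and "bounded_linear T"
    and "n_EP n T"
    and "regular_op T"
  shows "invertible_op T"
proof -
  obtain S where "moore_penrose_inverse T S" and commute: "(T ^^ n) \<circ> S = S \<circ> (T ^^ n)"
    using \<open>n_EP n T\<close> n_EP_def by blast
  then have "bounded_linear S" and TST: "T \<circ> S \<circ> T = T" and STS: "S \<circ> T \<circ> S = S"
    unfolding moore_penrose_inverse_def by blast+
  have lin: "linear T" "linear S"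
    using \<open>bounded_linear T\<close> \<open>bounded_linear S\<close> by (simp_all add: bounded_linear.linear)
  have "0 < n" using \<open>n \<ge> 1\<close> by simp
  have "inj T"
    using inj_if_kernel_in_range_funpow[OF lin TST STS commute \<open>0 < n\<close>] \<open>regular_op T\<close>
    unfolding regular_op_def by blast
  moreover have "inj S" by (rule inj_commuting_inner_inverse[OF lin \<open>inj T\<close> TST commute \<open>0 < n\<close>])
  ultimately have "S \<circ> T = id" "T \<circ> S = id"
    using inner_inverse_inj_left_inverse TST STS by blast+
  then show ?thesis unfolding invertible_op_def using \<open>bounded_linear S\<close> by blast
qed

end
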